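(* Consider a monopoly SP maximizing social welfare net of investment cost. (1) For a fixed small-cell density $\lambda>1$, the welfare-maximizing bandwidth split coincides with the revenue-maximizing one, $B_S=\frac{\epsilon N_fB}{\epsilon N_f+N_m}$, $B_M=\frac{N_mB}{\epsilon N_f+N_m}$ with $\epsilon=\lambda^{1/\alpha-1}$, with market-clearing prices. (2) Define $$W(\lambda)=\begin{cases}\frac{1}{1-\alpha}(BR_0)^{1-\alpha}(N_m+N_f)^{\alpha}-I_S\lambda, & 0\le\lambda\le 1,\\ \frac{1}{1-\alpha}(BR_0)^{1-\alpha}\big(N_m+\lambda^{\frac1\alpha-1}N_f\big)^{\alpha}-I_S\lambda, & \lambda>1.\end{cases}$$ Every maximizer $\lambda^{\mathrm{sw}}$ of $W$ over $[0,\infty)$ satisfies $\lambda^{\mathrm{sw}}=0$ or $\lambda^{\mathrm{sw}}=\lambda^*$ where $\lambda^*>1$ solves $$N_f(BR_0)^{1-\alpha}(\lambda^* )^{\frac1\alpha-2}\big(N_f(\lambda^* )^{\frac1\alpha-1}+N_m\big)^{\alpha-1}=I_S.$$ (3) If $\lambda^{\mathrm{sw}}$ is a maximizer of $W$ and $\lambda^{\mathrm{rev}}$ is a maximizer of $S$ (defined in the context) with $\lambda^{\mathrm{sw}}>1$ and $\lambda^{\mathrm{rev}}>1$, then $\lambda^{\mathrm{sw}}>\lambda^{\mathrm{rev}}$.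
   Context: Parameters: $\alpha\in(0,1)$; densities $N_m,N_f>0$ of mobile and fixed users; spectral efficiency $R_0>0$; bandwidth $B>0$; cost $I_S>0$ per unit small-cell density. Utility $u(r)=\frac{r^{1-\alpha}}{1-\alpha}$. For fixed density $\lambda$ and split $(B_M,B_S)$ with $B_M+B_S=B$, mobile users are served by macro-cells and fixed users by small-cells at market-clearing prices, giving welfare $N_m u(B_MR_0/N_m)+N_f u(\lambda B_SR_0/N_f)-I_S\lambda$ and revenue $R_0B_M(B_MR_0/N_m)^{-\alpha}+R_0\lambda B_S(\lambda B_SR_0/N_f)^{-\alpha}-I_S\lambda$; for $\lambda\le1$ all bandwidth is used in macro-cells serving all $N_m+N_f$ users. The revenue (net of investment) under the optimal split is $$S(\lambda)=\begin{cases}(BR_0)^{1-\alpha}(N_m+N_f)^{\alpha}-I_S\lambda, & 0\le\lambda\le 1,\\ (BR_0)^{1-\alpha}\big(N_m+\lambda^{\frac1\alpha-1}N_f\big)^{\alpha}-I_S\lambda, & \lambda>1,\end{cases}$$ and $W(\lambda)$ in the claim is the corresponding net social welfare. *)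

theory Defs
  imports Complex_Main
begin

definition util :: "real \<Rightarrow> real \<Rightarrow> real" where
  "util \<alpha> r = r powr (1 - \<alpha>) / (1 - \<alpha>)"

definition welfare_split ::
  "real \<Rightarrow> real \<Rightarrow> real \<Rightarrow> real \<Rightarrow> real \<Rightarrow> real \<Rightarrow> real \<Rightarrow> real \<Rightarrow> real" where
  "welfare_split \<alpha> Nm Nf R0 IS lam BM BS =
     Nm * util \<alpha> (BM * R0 / Nm) + Nf * util \<alpha> (lam * BS * R0 / Nf) - IS * lam"

text \<open>Revenue net of investment for fixed density lam > 1 and split (BM, BS),
  at market-clearing prices.\<close>
definition revenue_split ::
  "real \<Rightarrow> real \<Rightarrow> real \<Rightarrow> real \<Rightarrow> real \<Rightarrow> real \<Rightarrow> real \<Rightarrow> real \<Rightarrow> real" where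
  "revenue_split \<alpha> Nm Nf R0 IS lam BM BS =
     R0 * BM * (BM * R0 / Nm) powr (- \<alpha>)
     + R0 * lam * BS * (lam * BS * R0 / Nf) powr (- \<alpha>) - IS * lam"

definition opt_split :: "(real \<Rightarrow> real \<Rightarrow> real) \<Rightarrow> real \<Rightarrow> real \<Rightarrow> real \<Rightarrow> bool" where
  "opt_split f B BM BS \<longleftrightarrow> 0 \<le> BM \<and> 0 \<le> BS \<and> BM + BS = B \<and>
     (\<forall>x y. 0 \<le> x \<longrightarrow> 0 \<le> y \<longrightarrow> x + y = B \<longrightarrow> f x y \<le> f BM BS)"

definition W_sw :: "real \<Rightarrow> real \<Rightarrow> real \<Rightarrow> real \<Rightarrow> real \<Rightarrow> real \<Rightarrow> real \<Rightarrow> real" where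
  "W_sw \<alpha> Nm Nf R0 B IS lam =
     (if lam \<le> 1 then (1 / (1 - \<alpha>)) * (B * R0) powr (1 - \<alpha>) * (Nm + Nf) powr \<alpha> - IS * lam
      else (1 / (1 - \<alpha>)) * (B * R0) powr (1 - \<alpha>)
             * (Nm + lam powr (1 / \<alpha> - 1) * Nf) powr \<alpha> - IS * lam)"

definition S_rev :: "real \<Rightarrow> real \<Rightarrow> real \<Rightarrow> real \<Rightarrow> real \<Rightarrow> real \<Rightarrow> real \<Rightarrow> real" where
  "S_rev \<alpha> Nm Nf R0 B IS lam =
     (if lam \<le> 1 then (B * R0) powr (1 - \<alpha>) * (Nm + Nf) powr \<alpha> - IS * lam
      else (B * R0) powr (1 - \<alpha>) * (Nm + lam powr (1 / \<alpha> - 1) * Nf) powr \<alpha> - IS * lam)"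

definition is_max_nonneg :: "(real \<Rightarrow> real) \<Rightarrow> real \<Rightarrow> bool" where
  "is_max_nonneg g x \<longleftrightarrow> 0 \<le> x \<and> (\<forall>y. 0 \<le> y \<longrightarrow> g y \<le> g x)"

end

theory Submission
  imports Defs
begin

text \<open>For a fixed density, welfare and revenue (at market-clearing prices) are, on the
  simplex \<open>B\<^sub>M + B\<^sub>S = B\<close>, positive multiples of the same strictly concave function
  \<open>a B\<^sub>M\<^sup>1\<^sup>-\<^sup>\<alpha> + b B\<^sub>S\<^sup>1\<^sup>-\<^sup>\<alpha>\<close> (with factors \<open>1/(1-\<alpha>)\<close> and \<open>1\<close>), so they share the
  unique split at which the marginals balance. For \<open>\<lambda> > 1\<close> the optimal-split objectives are
  \<open>C u(\<lambda>)/(1-\<alpha>) - I\<^sub>S \<lambda>\<close> and \<open>C u(\<lambda>) - I\<^sub>S \<lambda>\<close> for one function \<open>u\<close>; an interior maximiser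
  is stationary, and on \<open>[0,1]\<close> welfare strictly decreases. Adding the two revealed-preference
  inequalities gives \<open>\<lambda>\<^sup>r\<^sup>e\<^sup>v \<le> \<lambda>\<^sup>s\<^sup>w\<close>, and equality is impossible because the two first-order
  conditions differ by the factor \<open>1 - \<alpha>\<close>.\<close>

lemma powr_less_Bernoulli:
  fixes p s :: real
  assumes "0 < p" "p < 1" "0 \<le> s" "s \<noteq> 1"
  shows "s powr p < 1 + p * (s - 1)"
proof (cases "s = 0")
  case True
  then show ?thesis using assms by simp
next
  case False
  then have "0 < s" using assms by simp
  have deriv: "DERIV (\<lambda>t. t powr p) x :> p * x powr (p - 1)" if "0 < x" for x
    using that by (rule has_real_derivative_powr)
  consider "s < 1" | "1 < s" using assms by linarith
  then show ?thesis
  proof cases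
    case 1
    obtain z where z: "s < z" "z < 1" "1 powr p - s powr p = (1 - s) * (p * z powr (p - 1))"
      using MVT2[OF 1, of "\<lambda>t. t powr p" "\<lambda>x. p * x powr (p - 1)"] deriv \<open>0 < s\<close> by force
    have "1 < z powr (p - 1)"
      using powr_less_mono2_neg[of "p - 1" z 1] z \<open>0 < s\<close> assms by simp
    then have "(1 - s) * p < (1 - s) * (p * z powr (p - 1))" using 1 assms by simp
    then show ?thesis using z by (simp add: algebra_simps)
  next
    case 2
    obtain z where z: "1 < z" "z < s" "s powr p - 1 powr p = (s - 1) * (p * z powr (p - 1))"
      using MVT2[OF 2, of "\<lambda>t. t powr p" "\<lambda>x. p * x powr (p - 1)"] deriv by force
    have "z powr (p - 1) < 1"
      using z assms by (intro powr_less_one) auto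
    then have "(s - 1) * (p * z powr (p - 1)) < (s - 1) * p" using 2 assms by simp
    then show ?thesis using z by (simp add: algebra_simps)
  qed
qed

lemma powr_less_tangent:
  fixes p t t0 :: real
  assumes "0 < p" "p < 1" "0 < t0" "0 \<le> t" "t \<noteq> t0"
  shows "t powr p < t0 powr p + p * t0 powr (p - 1) * (t - t0)"
proof -
  have "(t / t0) powr p < 1 + p * (t / t0 - 1)"
    using powr_less_Bernoulli[of p "t / t0"] assms by simp
  then have "t powr p < t0 powr p * (1 + p * (t / t0 - 1))"
    using assms by (simp add: powr_divide divide_less_eq mult.commute)
  also have "\<dots> = t0 powr p + p * (t0 powr p / t0) * (t - t0)"
    using assms by (simp add: field_simps)
  also have "t0 powr p / t0 = t0 powr (p - 1)"
    using assms by (simp add: powr_diff)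
  finally show ?thesis .
qed

lemma powr_sum_less_at_stationary_point:
  fixes p a b x0 y0 x y :: real
  assumes "0 < p" "p < 1" "0 < a" "0 < b" "0 < x0" "0 < y0"
    and stationary: "a * x0 powr (p - 1) = b * y0 powr (p - 1)"
    and "0 \<le> x" "0 \<le> y" "x + y = x0 + y0" "x \<noteq> x0"
  shows "a * x powr p + b * y powr p < a * x0 powr p + b * y0 powr p"
proof -
  have "y \<noteq> y0" using assms by auto
  have "a * x powr p < a * (x0 powr p + p * x0 powr (p - 1) * (x - x0))"
    using powr_less_tangent[of p x0 x] assms(1-5,8,11) by simp
  also have "\<dots> = a * x0 powr p + p * (a * x0 powr (p - 1)) * (x - x0)"
    by (simp add: algebra_simps)
  finally have x_term: "a * x powr p < \<dots>" .
  have "b * y powr p < b * (y0 powr p + p * y0 powr (p - 1) * (y - y0))"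
    using powr_less_tangent[of p y0 y] assms(1,2,4,6,9) \<open>y \<noteq> y0\<close> by simp
  also have "\<dots> = b * y0 powr p + p * (b * y0 powr (p - 1)) * (y - y0)"
    by (simp add: algebra_simps)
  finally have y_term: "b * y powr p < \<dots>" .
  have "p * (a * x0 powr (p - 1)) * (x - x0) + p * (b * y0 powr (p - 1)) * (y - y0)
      = p * (b * y0 powr (p - 1)) * ((x - x0) + (y - y0))"
    unfolding stationary by (simp only: distrib_left)
  also have "\<dots> = 0" using assms by simp
  finally show ?thesis using x_term y_term by linarith
qed

lemma opt_split_iff_stationary_point:
  fixes p a b c d x0 y0 B BM BS :: real
  assumes "0 < p" "p < 1" "0 < a" "0 < b" "0 < c" "0 < x0" "0 < y0" "x0 + y0 = B"
    and stationary: "a * x0 powr (p - 1) = b * y0 powr (p - 1)"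
    and f: "\<And>x y. 0 \<le> x \<Longrightarrow> 0 \<le> y \<Longrightarrow> f x y = c * (a * x powr p + b * y powr p) - d"
  shows "opt_split f B BM BS \<longleftrightarrow> BM = x0 \<and> BS = y0"
proof -
  have less: "f x y < f x0 y0" if "0 \<le> x" "0 \<le> y" "x + y = B" "x \<noteq> x0" for x y
    using powr_sum_less_at_stationary_point[OF assms(1-4,6,7) stationary, of x y] that assms f
    by simp
  show ?thesis
  proof
    assume opt: "opt_split f B BM BS"
    then have "f x0 y0 \<le> f BM BS"
      using \<open>0 < x0\<close> \<open>0 < y0\<close> \<open>x0 + y0 = B\<close> unfolding opt_split_def by auto
    then have "BM = x0"
      using less[of BM BS] opt unfolding opt_split_def by fastforce
    then show "BM = x0 \<and> BS = y0"
      using opt assms unfolding opt_split_def by simp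
  next
    assume "BM = x0 \<and> BS = y0"
    moreover have "f x y \<le> f x0 y0" if "0 \<le> x" "0 \<le> y" "x + y = B" for x y
      using less[OF that] that assms by (cases "x = x0") auto
    ultimately show "opt_split f B BM BS"
      using assms unfolding opt_split_def by auto
  qed
qed

lemma util_scaled_eq:
  fixes \<alpha> c N x :: real
  assumes "0 \<le> x" "0 < c" "0 < N"
  shows "N * util \<alpha> (x * c / N) = N * (c / N) powr (1 - \<alpha>) * x powr (1 - \<alpha>) / (1 - \<alpha>)"
  using powr_mult[of x "c / N" "1 - \<alpha>"] assms by (simp add: util_def)

lemma revenue_term_eq:
  fixes \<alpha> c N x :: real
  assumes "0 \<le> x" "0 < c" "0 < N"
  shows "c * x * (x * c / N) powr (- \<alpha>) = N * (c / N) powr (1 - \<alpha>) * x powr (1 - \<alpha>)"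
proof -
  have "0 \<le> x * c / N" using assms by simp
  have "c * x * (x * c / N) powr (- \<alpha>) = N * ((x * c / N) * (x * c / N) powr (- \<alpha>))"
    using assms by simp
  also have "\<dots> = N * (x * c / N) powr (1 - \<alpha>)"
    using powr_mult_base[OF \<open>0 \<le> x * c / N\<close>, of "- \<alpha>"] by simp
  also have "\<dots> = N * (c / N) powr (1 - \<alpha>) * x powr (1 - \<alpha>)"
    using assms powr_mult[of x "c / N" "1 - \<alpha>"] by simp
  finally show ?thesis .
qed

lemma welfare_split_eq:
  fixes \<alpha> Nm Nf R0 IS lam x y :: real
  assumes "0 < Nm" "0 < Nf" "0 < R0" "0 < lam" "0 \<le> x" "0 \<le> y"
  shows "welfare_split \<alpha> Nm Nf R0 IS lam x y =
    1 / (1 - \<alpha>) * (Nm * (R0 / Nm) powr (1 - \<alpha>) * x powr (1 - \<alpha>)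
                    + Nf * (lam * R0 / Nf) powr (1 - \<alpha>) * y powr (1 - \<alpha>)) - IS * lam"
proof -
  have "welfare_split \<alpha> Nm Nf R0 IS lam x y
      = Nm * util \<alpha> (x * R0 / Nm) + Nf * util \<alpha> (y * (lam * R0) / Nf) - IS * lam"
    unfolding welfare_split_def by (simp add: ac_simps)
  also have "\<dots> = 1 / (1 - \<alpha>) * (Nm * (R0 / Nm) powr (1 - \<alpha>) * x powr (1 - \<alpha>)
                    + Nf * (lam * R0 / Nf) powr (1 - \<alpha>) * y powr (1 - \<alpha>)) - IS * lam"
    using util_scaled_eq[of x R0 Nm \<alpha>] util_scaled_eq[of y "lam * R0" Nf \<alpha>]
    using assms by (simp add: add_divide_distrib)
  finally show ?thesis .
qed

lemma revenue_split_eq: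
  fixes \<alpha> Nm Nf R0 IS lam x y :: real
  assumes "0 < Nm" "0 < Nf" "0 < R0" "0 < lam" "0 \<le> x" "0 \<le> y"
  shows "revenue_split \<alpha> Nm Nf R0 IS lam x y =
    Nm * (R0 / Nm) powr (1 - \<alpha>) * x powr (1 - \<alpha>)
    + Nf * (lam * R0 / Nf) powr (1 - \<alpha>) * y powr (1 - \<alpha>) - IS * lam"
proof -
  have "revenue_split \<alpha> Nm Nf R0 IS lam x y
      = R0 * x * (x * R0 / Nm) powr (- \<alpha>) + (lam * R0) * y * (y * (lam * R0) / Nf) powr (- \<alpha>)
        - IS * lam"
    unfolding revenue_split_def by (simp add: ac_simps)
  also have "\<dots> = Nm * (R0 / Nm) powr (1 - \<alpha>) * x powr (1 - \<alpha>)
    + Nf * (lam * R0 / Nf) powr (1 - \<alpha>) * y powr (1 - \<alpha>) - IS * lam"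
    using revenue_term_eq[of x R0 Nm \<alpha>] revenue_term_eq[of y "lam * R0" Nf \<alpha>]
    using assms by simp
  finally show ?thesis .
qed

lemma optimal_split_stationary:
  fixes \<alpha> Nm Nf R0 B lam :: real
  assumes "0 < \<alpha>" "\<alpha> < 1" "0 < Nm" "0 < Nf" "0 < R0" "0 < B" "0 < lam"
  defines "\<epsilon> \<equiv> lam powr (1 / \<alpha> - 1)"
  shows "Nm * (R0 / Nm) powr (1 - \<alpha>) * (Nm * B / (\<epsilon> * Nf + Nm)) powr (- \<alpha>)
       = Nf * (lam * R0 / Nf) powr (1 - \<alpha>) * (\<epsilon> * Nf * B / (\<epsilon> * Nf + Nm)) powr (- \<alpha>)"
proof -
  \<comment> \<open>Both sides equal \<open>R0\<^sup>1\<^sup>-\<^sup>\<alpha> (B/(\<epsilon> Nf + Nm))\<^sup>-\<^sup>\<alpha>\<close> since \<open>\<epsilon>\<^sup>-\<^sup>\<alpha> = lam\<^sup>\<alpha>\<^sup>-\<^sup>1\<close>; compare logarithms.\<close>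
  have "0 < \<epsilon>" "0 < \<epsilon> * Nf + Nm" using assms by (simp_all add: add_pos_pos)
  moreover have "ln \<epsilon> = (1 / \<alpha> - 1) * ln lam" using assms by (simp add: ln_powr)
  ultimately show ?thesis
    using assms by (subst ln_inj_iff[symmetric]) (simp_all add: ln_mult ln_div ln_powr field_simps)
qed

lemma opt_split_welfare_revenue:
  fixes \<alpha> Nm Nf R0 B IS lam BM BS :: real
  assumes "0 < \<alpha>" "\<alpha> < 1" "0 < Nm" "0 < Nf" "0 < R0" "0 < B" "0 < lam"
  defines "\<epsilon> \<equiv> lam powr (1 / \<alpha> - 1)"
  shows "opt_split (welfare_split \<alpha> Nm Nf R0 IS lam) B BM BS
           \<longleftrightarrow> BM = Nm * B / (\<epsilon> * Nf + Nm) \<and> BS = \<epsilon> * Nf * B / (\<epsilon> * Nf + Nm)"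
    and "opt_split (revenue_split \<alpha> Nm Nf R0 IS lam) B BM BS
           \<longleftrightarrow> BM = Nm * B / (\<epsilon> * Nf + Nm) \<and> BS = \<epsilon> * Nf * B / (\<epsilon> * Nf + Nm)"
proof -
  have "0 < \<epsilon> * Nf + Nm" using assms by (simp add: add_pos_pos)
  then have split: "0 < Nm * B / (\<epsilon> * Nf + Nm)" "0 < \<epsilon> * Nf * B / (\<epsilon> * Nf + Nm)"
      "Nm * B / (\<epsilon> * Nf + Nm) + \<epsilon> * Nf * B / (\<epsilon> * Nf + Nm) = B"
    using assms by (simp_all add: add_divide_distrib[symmetric] field_simps)
  have stationary: "Nm * (R0 / Nm) powr (1 - \<alpha>) * (Nm * B / (\<epsilon> * Nf + Nm)) powr ((1 - \<alpha>) - 1)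
       = Nf * (lam * R0 / Nf) powr (1 - \<alpha>) * (\<epsilon> * Nf * B / (\<epsilon> * Nf + Nm)) powr ((1 - \<alpha>) - 1)"
    using optimal_split_stationary[OF assms(1-7)] unfolding \<epsilon>_def by simp
  have coeffs: "0 < Nm * (R0 / Nm) powr (1 - \<alpha>)" "0 < Nf * (lam * R0 / Nf) powr (1 - \<alpha>)"
    using assms by simp_all
  show "opt_split (welfare_split \<alpha> Nm Nf R0 IS lam) B BM BS
           \<longleftrightarrow> BM = Nm * B / (\<epsilon> * Nf + Nm) \<and> BS = \<epsilon> * Nf * B / (\<epsilon> * Nf + Nm)"
    using assms by (intro opt_split_iff_stationary_point[OF _ _ coeffs _ split stationary,
          where c = "1 / (1 - \<alpha>)" and d = "IS * lam"])
      (simp_all add: welfare_split_eq)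
  show "opt_split (revenue_split \<alpha> Nm Nf R0 IS lam) B BM BS
           \<longleftrightarrow> BM = Nm * B / (\<epsilon> * Nf + Nm) \<and> BS = \<epsilon> * Nf * B / (\<epsilon> * Nf + Nm)"
    using assms by (intro opt_split_iff_stationary_point[OF _ _ coeffs _ split stationary,
          where c = 1 and d = "IS * lam"])
      (simp_all add: revenue_split_eq)
qed

definition effective_users :: "real \<Rightarrow> real \<Rightarrow> real \<Rightarrow> real \<Rightarrow> real" where
  "effective_users \<alpha> Nm Nf l = (Nm + l powr (1 / \<alpha> - 1) * Nf) powr \<alpha>"

lemma W_sw_above_one:
  "1 < l \<Longrightarrow> W_sw \<alpha> Nm Nf R0 B IS l
     = (B * R0) powr (1 - \<alpha>) / (1 - \<alpha>) * effective_users \<alpha> Nm Nf l - IS * l"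
  by (simp add: W_sw_def effective_users_def)

lemma S_rev_above_one:
  "1 < l \<Longrightarrow> S_rev \<alpha> Nm Nf R0 B IS l
     = (B * R0) powr (1 - \<alpha>) * effective_users \<alpha> Nm Nf l - IS * l"
  by (simp add: S_rev_def effective_users_def)

lemma has_real_derivative_effective_users:
  fixes \<alpha> Nm Nf l :: real
  assumes "0 < \<alpha>" "0 < Nm" "0 < Nf" "0 < l"
  shows "(effective_users \<alpha> Nm Nf has_real_derivative
     (1 - \<alpha>) * (Nf * l powr (1 / \<alpha> - 2) * (Nf * l powr (1 / \<alpha> - 1) + Nm) powr (\<alpha> - 1))) (at l)"
proof -
  have pos: "0 < Nm + l powr (1 / \<alpha> - 1) * Nf" using assms by (simp add: add_pos_nonneg)
  have inner: "((\<lambda>l. Nm + l powr (1 / \<alpha> - 1) * Nf) has_real_derivative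
      (1 / \<alpha> - 1) * l powr (1 / \<alpha> - 1 - 1) * Nf) (at l)"
    using has_real_derivative_powr[OF assms(4), of "1 / \<alpha> - 1"] assms
    by (auto intro!: derivative_eq_intros)
  have "(effective_users \<alpha> Nm Nf has_real_derivative
      \<alpha> * (Nm + l powr (1 / \<alpha> - 1) * Nf) powr (\<alpha> - 1) * ((1 / \<alpha> - 1) * l powr (1 / \<alpha> - 1 - 1) * Nf))
      (at l)"
    unfolding effective_users_def[abs_def]
    by (rule DERIV_chain2[OF has_real_derivative_powr[OF pos] inner])
  moreover have "\<alpha> * (1 / \<alpha> - 1) = 1 - \<alpha>" "1 / \<alpha> - 1 - 1 = 1 / \<alpha> - 2"
    using assms by (simp_all add: field_simps)
  ultimately show ?thesis using assms by (simp add: algebra_simps)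
qed

lemma DERIV_zero_at_max_on_ray:
  fixes g :: "real \<Rightarrow> real"
  assumes "DERIV g x :> D" "a < x" "\<And>y. a < y \<Longrightarrow> g y \<le> g x"
  shows "D = 0"
proof (rule DERIV_local_max[OF assms(1)])
  show "\<forall>y. \<bar>x - y\<bar> < x - a \<longrightarrow> g y \<le> g x"
    using assms(3) by (auto simp: abs_if)
qed (use assms in simp)

lemma stationary_effective_users:
  fixes \<alpha> Nm Nf K IS l :: real
  assumes "0 < \<alpha>" "0 < Nm" "0 < Nf" "1 < l"
    and max: "\<And>y. 1 < y \<Longrightarrow> K * effective_users \<alpha> Nm Nf y - IS * y \<le> K * effective_users \<alpha> Nm Nf l - IS * l"
  shows "K * (1 - \<alpha>) * (Nf * l powr (1 / \<alpha> - 2) * (Nf * l powr (1 / \<alpha> - 1) + Nm) powr (\<alpha> - 1)) = IS"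
proof -
  have "DERIV (\<lambda>y. K * effective_users \<alpha> Nm Nf y - IS * y) l :>
      K * ((1 - \<alpha>) * (Nf * l powr (1 / \<alpha> - 2) * (Nf * l powr (1 / \<alpha> - 1) + Nm) powr (\<alpha> - 1))) - IS"
    using has_real_derivative_effective_users[of \<alpha> Nm Nf l] assms
    by (auto intro!: derivative_eq_intros)
  from DERIV_zero_at_max_on_ray[OF this \<open>1 < l\<close> max] show ?thesis by simp
qed

lemma W_sw_max_stationary:
  fixes \<alpha> Nm Nf R0 B IS l :: real
  assumes "0 < \<alpha>" "\<alpha> < 1" "0 < Nm" "0 < Nf"
    and "is_max_nonneg (W_sw \<alpha> Nm Nf R0 B IS) l" "1 < l"
  shows "Nf * (B * R0) powr (1 - \<alpha>) * l powr (1 / \<alpha> - 2)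
           * (Nf * l powr (1 / \<alpha> - 1) + Nm) powr (\<alpha> - 1) = IS"
proof -
  have "(B * R0) powr (1 - \<alpha>) / (1 - \<alpha>) * (1 - \<alpha>)
      * (Nf * l powr (1 / \<alpha> - 2) * (Nf * l powr (1 / \<alpha> - 1) + Nm) powr (\<alpha> - 1)) = IS"
  proof (rule stationary_effective_users)
    fix y :: real assume "1 < y"
    then have "W_sw \<alpha> Nm Nf R0 B IS y \<le> W_sw \<alpha> Nm Nf R0 B IS l"
      using assms(5) unfolding is_max_nonneg_def by simp
    then show "(B * R0) powr (1 - \<alpha>) / (1 - \<alpha>) * effective_users \<alpha> Nm Nf y - IS * y
        \<le> (B * R0) powr (1 - \<alpha>) / (1 - \<alpha>) * effective_users \<alpha> Nm Nf l - IS * l"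
      using \<open>1 < y\<close> \<open>1 < l\<close> by (simp add: W_sw_above_one)
  qed (use assms in auto)
  then show ?thesis using assms by (simp add: ac_simps)
qed

lemma S_rev_max_stationary:
  fixes \<alpha> Nm Nf R0 B IS l :: real
  assumes "0 < \<alpha>" "0 < Nm" "0 < Nf"
    and "is_max_nonneg (S_rev \<alpha> Nm Nf R0 B IS) l" "1 < l"
  shows "(1 - \<alpha>) * (Nf * (B * R0) powr (1 - \<alpha>) * l powr (1 / \<alpha> - 2)
           * (Nf * l powr (1 / \<alpha> - 1) + Nm) powr (\<alpha> - 1)) = IS"
proof -
  have "(B * R0) powr (1 - \<alpha>) * (1 - \<alpha>)
      * (Nf * l powr (1 / \<alpha> - 2) * (Nf * l powr (1 / \<alpha> - 1) + Nm) powr (\<alpha> - 1)) = IS"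
  proof (rule stationary_effective_users)
    fix y :: real assume "1 < y"
    then have "S_rev \<alpha> Nm Nf R0 B IS y \<le> S_rev \<alpha> Nm Nf R0 B IS l"
      using assms(4) unfolding is_max_nonneg_def by simp
    then show "(B * R0) powr (1 - \<alpha>) * effective_users \<alpha> Nm Nf y - IS * y
        \<le> (B * R0) powr (1 - \<alpha>) * effective_users \<alpha> Nm Nf l - IS * l"
      using \<open>1 < y\<close> \<open>1 < l\<close> by (simp add: S_rev_above_one)
  qed (use assms in auto)
  then show ?thesis by (simp add: ac_simps)
qed

lemma W_sw_max_le_one_eq_zero:
  assumes "0 < IS" "is_max_nonneg (W_sw \<alpha> Nm Nf R0 B IS) l" "l \<le> 1"
  shows "l = 0"
proof -
  have "0 \<le> l" "W_sw \<alpha> Nm Nf R0 B IS 0 \<le> W_sw \<alpha> Nm Nf R0 B IS l"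
    using assms(2) unfolding is_max_nonneg_def by simp_all
  then show ?thesis using assms by (simp add: W_sw_def mult_le_0_iff)
qed

lemma S_rev_max_less_W_sw_max:
  fixes \<alpha> Nm Nf R0 B IS lsw lrev :: real
  assumes "0 < \<alpha>" "\<alpha> < 1" "0 < Nm" "0 < Nf" "0 < IS"
    and max_sw: "is_max_nonneg (W_sw \<alpha> Nm Nf R0 B IS) lsw" "1 < lsw"
    and max_rev: "is_max_nonneg (S_rev \<alpha> Nm Nf R0 B IS) lrev" "1 < lrev"
  shows "lrev < lsw"
proof -
  define C where "C = (B * R0) powr (1 - \<alpha>)"
  define u where "u = effective_users \<alpha> Nm Nf"
  have "W_sw \<alpha> Nm Nf R0 B IS lrev \<le> W_sw \<alpha> Nm Nf R0 B IS lsw"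
    using max_sw max_rev unfolding is_max_nonneg_def by simp
  then have "C / (1 - \<alpha>) * u lrev - IS * lrev \<le> C / (1 - \<alpha>) * u lsw - IS * lsw"
    using max_sw max_rev by (simp add: W_sw_above_one C_def u_def)
  then have "(1 - \<alpha>) * (C / (1 - \<alpha>) * u lrev - IS * lrev)
      \<le> (1 - \<alpha>) * (C / (1 - \<alpha>) * u lsw - IS * lsw)"
    using assms by (intro mult_left_mono) auto
  moreover have "(1 - \<alpha>) * (C / (1 - \<alpha>) * u l - IS * l) = C * u l - (1 - \<alpha>) * IS * l" for l
    using assms by (simp add: field_simps)
  ultimately have sw: "C * u lrev - (1 - \<alpha>) * IS * lrev \<le> C * u lsw - (1 - \<alpha>) * IS * lsw"
    by simp
  have "S_rev \<alpha> Nm Nf R0 B IS lsw \<le> S_rev \<alpha> Nm Nf R0 B IS lrev"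
    using max_sw max_rev unfolding is_max_nonneg_def by simp
  then have rev: "C * u lsw - IS * lsw \<le> C * u lrev - IS * lrev"
    using max_sw max_rev by (simp add: S_rev_above_one C_def u_def)
  \<comment> \<open>Adding the two revealed-preference inequalities cancels the \<open>C u\<close> terms.\<close>
  from sw rev have "\<alpha> * IS * lrev \<le> \<alpha> * IS * lsw" by (simp add: algebra_simps)
  then have "lrev \<le> lsw" using assms by simp
  moreover have "lrev \<noteq> lsw"
    using W_sw_max_stationary[OF assms(1-4) max_sw] S_rev_max_stationary[OF assms(1,3,4) max_rev]
      assms by auto
  ultimately show ?thesis by simp
qed

theorem theorem7:
  fixes \<alpha> Nm Nf R0 B IS :: real
  assumes "0 < \<alpha>" "\<alpha> < 1" "0 < Nm" "0 < Nf" "0 < R0" "0 < B" "0 < IS"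
  shows
    "(\<forall>lam > 1.
        let \<epsilon> = lam powr (1 / \<alpha> - 1);
            BS0 = \<epsilon> * Nf * B / (\<epsilon> * Nf + Nm);
            BM0 = Nm * B / (\<epsilon> * Nf + Nm)
        in (\<forall>BM BS. opt_split (welfare_split \<alpha> Nm Nf R0 IS lam) B BM BS
                       \<longleftrightarrow> BM = BM0 \<and> BS = BS0) \<and>
           (\<forall>BM BS. opt_split (revenue_split \<alpha> Nm Nf R0 IS lam) B BM BS
                       \<longleftrightarrow> BM = BM0 \<and> BS = BS0))
     \<and> (\<forall>lsw. is_max_nonneg (W_sw \<alpha> Nm Nf R0 B IS) lsw \<longrightarrow>
          lsw = 0 \<or>
          (lsw > 1 \<and>
           Nf * (B * R0) powr (1 - \<alpha>) * lsw powr (1 / \<alpha> - 2)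
             * (Nf * lsw powr (1 / \<alpha> - 1) + Nm) powr (\<alpha> - 1) = IS))
     \<and> (\<forall>lsw lrev. is_max_nonneg (W_sw \<alpha> Nm Nf R0 B IS) lsw \<longrightarrow>
          is_max_nonneg (S_rev \<alpha> Nm Nf R0 B IS) lrev \<longrightarrow>
          lsw > 1 \<longrightarrow> lrev > 1 \<longrightarrow> lsw > lrev)"
proof (intro conjI allI impI)
  fix lsw assume max_sw: "is_max_nonneg (W_sw \<alpha> Nm Nf R0 B IS) lsw"
  show "lsw = 0 \<or> (lsw > 1 \<and>
           Nf * (B * R0) powr (1 - \<alpha>) * lsw powr (1 / \<alpha> - 2)
             * (Nf * lsw powr (1 / \<alpha> - 1) + Nm) powr (\<alpha> - 1) = IS)"
    using W_sw_max_le_one_eq_zero[OF assms(7) max_sw] W_sw_max_stationary[OF assms(1-4) max_sw]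
    by fastforce
qed (use opt_split_welfare_revenue[OF assms(1-6)] S_rev_max_less_W_sw_max[OF assms(1-4,7)]
     in \<open>auto simp: Let_def\<close>)

end
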